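(* Let $G=G_1\times\cdots\times G_m$ be a group, let $U\subset G$ be finite, and let $U_i$ be the projection of $U$ to the factor $G_i$. Suppose there exist $\alpha,\beta>0$ such that $|U_i^n|\geqslant(\alpha|U_i|)^{\beta n}$ for every $n\in\mathbb{N}$ and every $i\in\{1,\dots,m\}$. Then $|U^n|\geqslant(\alpha^m|U|)^{(\beta/m)n}$ for every $n\in\mathbb{N}$.
   Context: $U^n=\{u_1\cdots u_n:u_i\in U\}$. *)

theory Defs
  imports "HOL-Analysis.Analysis" "HOL-Algebra.Product_Groups"
begin

fun set_power :: "('a, 'b) monoid_scheme \<Rightarrow> 'a set \<Rightarrow> nat \<Rightarrow> 'a set" where
  "set_power G U 0 = {\<one>\<^bsub>G\<^esub>}"
| "set_power G U (Suc n) = set_power G U n <#>\<^bsub>G\<^esub> U"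

end

theory Submission
  imports Defs
begin

text \<open>Projecting to the factor \<open>G\<^sub>i\<close> maps \<open>U\<^sup>n\<close> onto \<open>U\<^sub>i\<^sup>n\<close>, so \<open>|U\<^sup>n| \<ge> |U\<^sub>i\<^sup>n| \<ge> (\<alpha>|U\<^sub>i|)\<^bsup>\<beta>n\<^esup>\<close>
  for every \<open>i\<close>. Multiplying these \<open>m\<close> bounds gives
  \<open>|U\<^sup>n|\<^bsup>m\<^esup> \<ge> (\<alpha>\<^sup>m |U\<^sub>1|\<cdots>|U\<^sub>m|)\<^bsup>\<beta>n\<^esup> \<ge> (\<alpha>\<^sup>m|U|)\<^bsup>\<beta>n\<^esup>\<close>, because \<open>U\<close> embeds into
  \<open>U\<^sub>1 \<times> \<cdots> \<times> U\<^sub>m\<close>; taking \<open>m\<close>-th roots concludes.\<close>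

lemma finite_set_power:
  assumes "finite U"
  shows "finite (set_power H U n)"
  by (induction n) (auto simp: set_mult_def assms)

lemma image_proj_set_power_product_group:
  assumes "i \<in> I"
  shows "(\<lambda>u. u i) ` set_power (product_group I G) U n = set_power (G i) ((\<lambda>u. u i) ` U) n"
proof (induction n)
  case 0
  then show ?case using assms by simp
next
  case (Suc n)
  have "(\<lambda>u. u i) ` (set_power (product_group I G) U n <#>\<^bsub>product_group I G\<^esub> U)
      = ((\<lambda>u. u i) ` set_power (product_group I G) U n) <#>\<^bsub>G i\<^esub> ((\<lambda>u. u i) ` U)"
    using assms by (auto simp: set_mult_def image_iff) blast+
  then show ?case using Suc by simp
qed

lemma card_set_power_proj_le:
  assumes "i \<in> I" and "finite U"
  shows "card (set_power (G i) ((\<lambda>u. u i) ` U) n) \<le> card (set_power (product_group I G) U n)"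
  by (metis image_proj_set_power_product_group[OF assms(1)] card_image_le
      finite_set_power[OF assms(2)])

lemma card_le_prod_card_proj:
  assumes "finite I" and "U \<subseteq> extensional I"
  shows "card U \<le> (\<Prod>i\<in>I. card ((\<lambda>u. u i) ` U))"
proof (cases "finite U")
  case True
  have "U \<subseteq> (\<Pi>\<^sub>E i\<in>I. (\<lambda>u. u i) ` U)"
    using assms(2) by (auto simp: PiE_iff extensional_def)
  then have "card U \<le> card (\<Pi>\<^sub>E i\<in>I. (\<lambda>u. u i) ` U)"
    by (rule card_mono[rotated]) (simp add: finite_PiE assms(1) True)
  then show ?thesis by (simp add: card_PiE assms(1))
qed simp

lemma prod_powr_le_if_powr_le_each:
  fixes N :: real
  assumes "finite I" and "I \<noteq> {}" and "N \<ge> 0"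
    and "\<And>i. i \<in> I \<Longrightarrow> a i \<ge> 0" and "\<And>i. i \<in> I \<Longrightarrow> a i powr e \<le> N"
  shows "(\<Prod>i\<in>I. a i) powr (e / card I) \<le> N"
proof -
  have card_pos: "real (card I) > 0" using assms(1,2) by (simp add: card_gt_0_iff)
  have "(\<Prod>i\<in>I. a i) powr e = (\<Prod>i\<in>I. a i powr e)"
    using assms(4) by (simp add: prod_powr_distrib)
  also have "\<dots> \<le> (\<Prod>i\<in>I. N)"
    by (rule prod_mono) (use assms(5) in auto)
  also have "\<dots> = N powr card I"
    using assms(3) card_pos by (cases "N = 0") (auto simp: powr_realpow)
  finally have "((\<Prod>i\<in>I. a i) powr e) powr (1 / card I) \<le> (N powr card I) powr (1 / card I)"
    using card_pos by (intro powr_mono2) auto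
  then show ?thesis
    using card_pos assms(3) by (simp add: powr_powr)
qed

theorem corollary2p23:
  fixes G :: "nat \<Rightarrow> ('a, 'b) monoid_scheme"
    and m :: nat and U :: "(nat \<Rightarrow> 'a) set" and \<alpha> \<beta> :: real
  assumes "m \<ge> 1"
    and "\<And>i. i \<in> {1..m} \<Longrightarrow> group (G i)"
    and "U \<subseteq> carrier (product_group {1..m} G)"
    and "finite U"
    and "\<alpha> > 0" and "\<beta> > 0"
    and "\<And>n i. n \<ge> 1 \<Longrightarrow> i \<in> {1..m} \<Longrightarrow>
           real (card (set_power (G i) ((\<lambda>u. u i) ` U) n))
             \<ge> (\<alpha> * real (card ((\<lambda>u. u i) ` U))) powr (\<beta> * real n)"
  shows "\<And>n. n \<ge> 1 \<Longrightarrow>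
           real (card (set_power (product_group {1..m} G) U n))
             \<ge> (\<alpha> ^ m * real (card U)) powr ((\<beta> / real m) * real n)"
proof -
  fix n :: nat assume n: "n \<ge> 1"
  let ?c = "\<lambda>i. real (card ((\<lambda>u. u i) ` U))"
  have "card U \<le> (\<Prod>i\<in>{1..m}. card ((\<lambda>u. u i) ` U))"
    using assms(3) by (intro card_le_prod_card_proj) (auto simp: PiE_def)
  then have "\<alpha> ^ m * real (card U) \<le> (\<Prod>i\<in>{1..m}. \<alpha> * ?c i)"
    using assms(5) by (simp add: prod.distrib flip: of_nat_prod)
  then have "(\<alpha> ^ m * real (card U)) powr ((\<beta> * n) / m)
      \<le> (\<Prod>i\<in>{1..m}. \<alpha> * ?c i) powr ((\<beta> * n) / m)"
    using assms(5,6) by (intro powr_mono2) auto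
  also have "\<dots> \<le> real (card (set_power (product_group {1..m} G) U n))"
  proof -
    have "(\<alpha> * ?c i) powr (\<beta> * n) \<le> real (card (set_power (product_group {1..m} G) U n))"
      if "i \<in> {1..m}" for i
      using assms(7)[OF n that] card_set_power_proj_le[OF that assms(4), of G n] by linarith
    then show ?thesis
      using prod_powr_le_if_powr_le_each[of "{1..m}" _ "\<lambda>i. \<alpha> * ?c i" "\<beta> * n"] assms(1,5)
      by simp
  qed
  finally show "(\<alpha> ^ m * real (card U)) powr ((\<beta> / real m) * real n)
      \<le> real (card (set_power (product_group {1..m} G) U n))"
    by (simp add: mult.commute)
qed

end
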